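(* Let $X$ be a compact metric space and $f\colon X\to X$ continuous. If $f$ is expansive and $(X,f)$ has the shadowing property, then $(X,f)$ has $\gamma$-restricted two-sided orbital limit shadowing.
   Context: $f$ is expansive if there is $c>0$ such that for distinct $x,y\in X$ there exists $k\ge0$ with $d(f^k(x),f^k(y))\ge c$. $(X,f)$ has shadowing if for every $\epsilon>0$ there is $\delta>0$ such that for every sequence $\langle x_i\rangle_{i\ge0}$ with $d(f(x_i),x_{i+1})<\delta$ for all $i$ there is $z\in X$ with $d(f^i(z),x_i)<\epsilon$ for all $i\ge0$. A full trajectory is $\langle z_i\rangle_{i\in\mathbb Z}$ with $f(z_i)=z_{i+1}$. For two-sided sequences, $\omega(\langle x_i\rangle)=\bigcap_{M}\overline{\{x_n:n>M\}}$ and $\alpha(\langle x_i\rangle)=\bigcap_M\overline{\{x_n:n<-M\}}$. A two-sided asymptotic pseudo-orbit is $\langle x_i\rangle_{i\in\mathbb Z}$ with $d(f(x_i),x_{i+1})\to0$ as $i\to\pm\infty$. $\gamma$-restricted two-sided orbital limit shadowing: for every two-sided asymptotic pseudo-orbit $\langle x_i\rangle$ with $\alpha(\langle x_i\rangle)=\omega(\langle x_i\rangle)$ there is a full trajectory $\langle z_i\rangle$ with $\alpha(\langle z_i\rangle)=\alpha(\langle x_i\rangle)$ and $\omega(\langle z_i\rangle)=\omega(\langle x_i\rangle)$. *)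

theory Defs
  imports "HOL-Analysis.Analysis"
begin

definition expansive :: "'a::metric_space set \<Rightarrow> ('a \<Rightarrow> 'a) \<Rightarrow> bool" where
  "expansive X f \<longleftrightarrow> (\<exists>c>0. \<forall>x\<in>X. \<forall>y\<in>X. x \<noteq> y \<longrightarrow>
      (\<exists>k::nat. dist ((f ^^ k) x) ((f ^^ k) y) \<ge> c))"

definition shadowing :: "'a::metric_space set \<Rightarrow> ('a \<Rightarrow> 'a) \<Rightarrow> bool" where
  "shadowing X f \<longleftrightarrow> (\<forall>\<epsilon>>0. \<exists>\<delta>>0. \<forall>xs::nat \<Rightarrow> 'a.
      (\<forall>i. xs i \<in> X) \<and> (\<forall>i. dist (f (xs i)) (xs (Suc i)) < \<delta>) \<longrightarrow>
      (\<exists>z\<in>X. \<forall>i. dist ((f ^^ i) z) (xs i) < \<epsilon>))"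

definition omega_seq :: "(int \<Rightarrow> 'a::topological_space) \<Rightarrow> 'a set" where
  "omega_seq x = (\<Inter>M::int. closure {x n | n. n > M})"

definition alpha_seq :: "(int \<Rightarrow> 'a::topological_space) \<Rightarrow> 'a set" where
  "alpha_seq x = (\<Inter>M::int. closure {x n | n. n < - M})"

definition two_sided_asymptotic_pseudo_orbit ::
  "'a::metric_space set \<Rightarrow> ('a \<Rightarrow> 'a) \<Rightarrow> (int \<Rightarrow> 'a) \<Rightarrow> bool" where
  "two_sided_asymptotic_pseudo_orbit X f x \<longleftrightarrow> (\<forall>i. x i \<in> X) \<and>
     ((\<lambda>i. dist (f (x i)) (x (i + 1))) \<longlongrightarrow> 0) at_top \<and>
     ((\<lambda>i. dist (f (x i)) (x (i + 1))) \<longlongrightarrow> 0) at_bot"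

definition full_trajectory :: "'a set \<Rightarrow> ('a \<Rightarrow> 'a) \<Rightarrow> (int \<Rightarrow> 'a) \<Rightarrow> bool" where
  "full_trajectory X f z \<longleftrightarrow> (\<forall>i. z i \<in> X) \<and> (\<forall>i. f (z i) = z (i + 1))"

definition gamma_restricted_two_sided_orbital_limit_shadowing ::
  "'a::metric_space set \<Rightarrow> ('a \<Rightarrow> 'a) \<Rightarrow> bool" where
  "gamma_restricted_two_sided_orbital_limit_shadowing X f \<longleftrightarrow>
     (\<forall>x. two_sided_asymptotic_pseudo_orbit X f x \<and> alpha_seq x = omega_seq x \<longrightarrow>
        (\<exists>z. full_trajectory X f z \<and> alpha_seq z = alpha_seq x \<and> omega_seq z = omega_seq x))"

end

theory Submission
  imports Defs
begin

(* Let a be a point of the common limit set alpha(x) = omega(x). Choosing i far in the past and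
   j far in the future with x i and x j close to a, and cutting out the segment x i, ..., x (j - 1),
   gives a two-sided asymptotic pseudo-orbit with uniformly small jumps and with the same alpha- and
   omega-limit sets as x. For an expansive map with shadowing, shadows at a scale below half the
   expansivity constant are unique, so the shadows of the tails of this pseudo-orbit fit together
   into a full trajectory. Shadowing at finer scales together with uniqueness makes the trajectory
   asymptotic to the pseudo-orbit in forward time; in backward time the same follows from uniform
   expansivity on the compact space, applied to shadows of finite segments. Asymptotic sequences
   have the same limit sets. *)

section \<open>Limit sets of two-sided sequences\<close>

lemma omega_seq_iff: "p \<in> omega_seq x \<longleftrightarrow> (\<forall>e>0. \<exists>\<^sub>F n in at_top. dist (x n) p < e)"
  by (simp add: omega_seq_def closure_approachable frequently_def eventually_at_top_dense) blast

lemma alpha_seq_iff: "p \<in> alpha_seq x \<longleftrightarrow> (\<forall>e>0. \<exists>\<^sub>F n in at_bot. dist (x n) p < e)"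
proof -
  have "(\<exists>\<^sub>F n in at_bot. P n) \<longleftrightarrow> (\<forall>M. \<exists>n< -M. P n)" for P :: "int \<Rightarrow> bool"
    unfolding frequently_def eventually_at_bot_dense by (metis minus_minus)
  then show ?thesis
    by (simp add: alpha_seq_def closure_approachable) blast
qed

lemma frequently_dist_lt_if_asymptotic:
  assumes "((\<lambda>n. dist (y n) (x n)) \<longlongrightarrow> 0) F"
    and "\<forall>e>0. \<exists>\<^sub>F n in F. dist (x n) p < e"
  shows "\<forall>e>0. \<exists>\<^sub>F n in F. dist (y n) p < e"
proof (intro allI impI)
  fix e :: real
  assume "e > 0"
  then have "\<exists>\<^sub>F n in F. dist (x n) p < e/2"
    by (intro assms(2)[rule_format]) simp
  moreover have "\<forall>\<^sub>F n in F. dist (y n) (x n) < e/2"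
    using \<open>e > 0\<close> by (intro order_tendstoD(2)[OF assms(1)]) simp
  ultimately have "\<exists>\<^sub>F n in F. dist (y n) (x n) < e/2 \<and> dist (x n) p < e/2"
    by (rule frequently_eventually_conj)
  then show "\<exists>\<^sub>F n in F. dist (y n) p < e"
    by (rule frequently_elim1) metric
qed

lemma omega_seq_eq_if_asymptotic:
  assumes "((\<lambda>n. dist (y n) (x n)) \<longlongrightarrow> 0) at_top"
  shows "omega_seq y = omega_seq x"
proof -
  have "((\<lambda>n. dist (x n) (y n)) \<longlongrightarrow> 0) at_top"
    using assms by (simp add: dist_commute)
  then show ?thesis
    using frequently_dist_lt_if_asymptotic[OF assms] frequently_dist_lt_if_asymptotic
    unfolding set_eq_iff omega_seq_iff by blast
qed

lemma alpha_seq_eq_if_asymptotic: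
  assumes "((\<lambda>n. dist (y n) (x n)) \<longlongrightarrow> 0) at_bot"
  shows "alpha_seq y = alpha_seq x"
proof -
  have "((\<lambda>n. dist (x n) (y n)) \<longlongrightarrow> 0) at_bot"
    using assms by (simp add: dist_commute)
  then show ?thesis
    using frequently_dist_lt_if_asymptotic[OF assms] frequently_dist_lt_if_asymptotic
    unfolding set_eq_iff alpha_seq_iff by blast
qed

lemma filterlim_int_add_const_at_top: "filterlim (\<lambda>k::int. k + s) at_top at_top"
  unfolding filterlim_at_top
proof
  fix Z :: int
  show "\<forall>\<^sub>F k in at_top. Z \<le> k + s"
    using eventually_ge_at_top[of "Z - s"] by (rule eventually_mono) simp
qed

lemma eventually_at_top_int_shift:
  "(\<forall>\<^sub>F k in at_top. P (k + s)) \<longleftrightarrow> (\<forall>\<^sub>F k in at_top. P (k :: int))"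
proof
  have shift: "\<forall>\<^sub>F k in at_top. Q (k + t)" if "\<forall>\<^sub>F k in at_top. Q k" for Q and t :: int
    using filterlim_int_add_const_at_top that unfolding filterlim_iff by blast
  show "\<forall>\<^sub>F k in at_top. P k" if "\<forall>\<^sub>F k in at_top. P (k + s)"
    using shift[OF that, of "- s"] by simp
  show "\<forall>\<^sub>F k in at_top. P (k + s)" if "\<forall>\<^sub>F k in at_top. P k"
    using shift[OF that] .
qed

lemma omega_seq_shift:
  fixes x :: "int \<Rightarrow> 'a::metric_space"
  shows "omega_seq (\<lambda>n. x (n + s)) = omega_seq x"
  by (simp add: set_eq_iff omega_seq_iff frequently_def
      eventually_at_top_int_shift[of "\<lambda>n. \<not> dist (x n) _ < _"])

lemma omega_seq_nonempty:
  fixes x :: "int \<Rightarrow> 'a::metric_space"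
  assumes "compact X" and "\<And>n. x n \<in> X"
  shows "omega_seq x \<noteq> {}"
proof -
  have "filtermap x at_top \<noteq> bot" "\<forall>\<^sub>F y in filtermap x at_top. y \<in> X"
    using assms(2) by (simp_all add: filtermap_bot_iff eventually_filtermap)
  then obtain a where a: "inf (nhds a) (filtermap x at_top) \<noteq> bot"
    using compact_filter[THEN iffD1, OF assms(1), rule_format] by metis
  have "a \<in> omega_seq x"
    unfolding omega_seq_iff
  proof (intro allI impI)
    fix e :: real
    assume "e > 0"
    show "\<exists>\<^sub>F n in at_top. dist (x n) a < e"
    proof (rule ccontr)
      assume "\<not> ?thesis"
      then have "\<forall>\<^sub>F y in filtermap x at_top. \<not> dist y a < e"
        by (simp add: not_frequently eventually_filtermap)
      moreover have "\<forall>\<^sub>F y in nhds a. dist y a < e"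
        using \<open>e > 0\<close> by (auto simp: eventually_nhds_metric)
      ultimately have "\<forall>\<^sub>F y in inf (nhds a) (filtermap x at_top). False"
        by (auto intro: eventually_elim2 filter_leD[OF inf_le1] filter_leD[OF inf_le2])
      with a show False
        by (simp add: eventually_False)
    qed
  qed
  then show ?thesis by blast
qed

definition two_sided_asymptotic :: "(int \<Rightarrow> 'a::metric_space) \<Rightarrow> (int \<Rightarrow> 'a) \<Rightarrow> bool" where
  "two_sided_asymptotic z w \<longleftrightarrow>
     ((\<lambda>n. dist (z n) (w n)) \<longlongrightarrow> 0) at_top \<and> ((\<lambda>n. dist (z n) (w n)) \<longlongrightarrow> 0) at_bot"

lemma two_sided_asymptotic_limit_sets:
  assumes "two_sided_asymptotic z w"
  shows "alpha_seq z = alpha_seq w" and "omega_seq z = omega_seq w"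
  using assms alpha_seq_eq_if_asymptotic omega_seq_eq_if_asymptotic
  unfolding two_sided_asymptotic_def by blast+

section \<open>Shadowing in expansive systems\<close>

definition expansivity_constant :: "'a::metric_space set \<Rightarrow> ('a \<Rightarrow> 'a) \<Rightarrow> real \<Rightarrow> bool" where
  "expansivity_constant X f c \<longleftrightarrow> c > 0 \<and> (\<forall>x\<in>X. \<forall>y\<in>X. x \<noteq> y \<longrightarrow>
      (\<exists>k. dist ((f ^^ k) x) ((f ^^ k) y) \<ge> c))"

lemma expansive_iff_expansivity_constant: "expansive X f \<longleftrightarrow> (\<exists>c. expansivity_constant X f c)"
  unfolding expansive_def expansivity_constant_def by blast

definition shadowing_with :: "'a::metric_space set \<Rightarrow> ('a \<Rightarrow> 'a) \<Rightarrow> real \<Rightarrow> real \<Rightarrow> bool" where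
  "shadowing_with X f \<epsilon> \<delta> \<longleftrightarrow> (\<forall>xs. (\<forall>i. xs i \<in> X) \<and> (\<forall>i. dist (f (xs i)) (xs (Suc i)) < \<delta>) \<longrightarrow>
      (\<exists>z\<in>X. \<forall>i. dist ((f ^^ i) z) (xs i) < \<epsilon>))"

lemma shadowing_iff_shadowing_with: "shadowing X f \<longleftrightarrow> (\<forall>\<epsilon>>0. \<exists>\<delta>>0. shadowing_with X f \<epsilon> \<delta>)"
  unfolding shadowing_def shadowing_with_def ..

lemma shadowing_withE:
  assumes "shadowing_with X f \<epsilon> \<delta>" and "\<And>i. xs i \<in> X"
    and "\<And>i. dist (f (xs i)) (xs (Suc i)) < \<delta>"
  obtains z where "z \<in> X" and "\<And>i. dist ((f ^^ i) z) (xs i) < \<epsilon>"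
  using assms unfolding shadowing_with_def by blast

lemma funpow_image_subset: "f ` X \<subseteq> X \<Longrightarrow> (f ^^ n) ` X \<subseteq> X"
  by (induction n) (auto simp: image_subset_iff)

lemma continuous_on_funpow:
  assumes "f ` X \<subseteq> X" "continuous_on X f"
  shows "continuous_on X (f ^^ n)"
proof (induction n)
  case (Suc n)
  then show ?case
    using continuous_on_compose2[OF assms(2) Suc] funpow_image_subset[OF assms(1)]
    by (simp add: o_def)
qed (simp add: continuous_on_id)

lemma full_trajectory_funpow:
  assumes "full_trajectory X f z"
  shows "(f ^^ n) (z i) = z (i + int n)"
  using assms by (induction n) (auto simp: full_trajectory_def algebra_simps)

lemma expansivity_constant_orbit_eq:
  assumes "expansivity_constant X f c" and "p \<in> X" and "q \<in> X"
    and "\<And>n. dist ((f ^^ n) p) ((f ^^ n) q) < c"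
  shows "p = q"
  using assms unfolding expansivity_constant_def by (meson not_less)

lemma expansivity_constant_uniform:
  assumes "compact X" and "f ` X \<subseteq> X" and "continuous_on X f"
    and "expansivity_constant X f c" and "c' < c" and "\<eta> > 0"
  shows "\<exists>N. \<forall>a\<in>X. \<forall>b\<in>X. (\<forall>k\<le>N. dist ((f ^^ k) a) ((f ^^ k) b) \<le> c') \<longrightarrow> dist a b < \<eta>"
proof (rule ccontr)
  assume "\<not> ?thesis"
  then have "\<forall>N. \<exists>q. q \<in> X \<times> X \<and> (\<forall>k\<le>N. dist ((f ^^ k) (fst q)) ((f ^^ k) (snd q)) \<le> c')
                \<and> \<eta> \<le> dist (fst q) (snd q)"
    by (simp add: not_less Bex_def)
  then obtain q where q: "\<And>N. q N \<in> X \<times> X"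
    and q_close: "\<And>N k. k \<le> N \<Longrightarrow> dist ((f ^^ k) (fst (q N))) ((f ^^ k) (snd (q N))) \<le> c'"
    and q_far: "\<And>N. \<eta> \<le> dist (fst (q N)) (snd (q N))"
    by (metis choice)
  obtain l r where "l \<in> X \<times> X" and r: "strict_mono r" and "(q \<circ> r) \<longlonglongrightarrow> l"
    using compact_imp_seq_compact[OF compact_Times[OF assms(1,1)]] q
    unfolding seq_compact_def by meson
  then obtain a b where ab: "a \<in> X" "b \<in> X" and lim: "(q \<circ> r) \<longlonglongrightarrow> (a, b)"
    by (cases l) auto
  have lim_fst: "(\<lambda>n. fst (q (r n))) \<longlonglongrightarrow> a" and lim_snd: "(\<lambda>n. snd (q (r n))) \<longlonglongrightarrow> b"
    using tendsto_fst[OF lim] tendsto_snd[OF lim] by (simp_all add: o_def)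
  have "dist ((f ^^ k) a) ((f ^^ k) b) \<le> c'" for k
  proof (rule tendsto_upperbound)
    have cont: "continuous_on X (f ^^ k)"
      using assms(2,3) by (rule continuous_on_funpow)
    have "(\<lambda>n. (f ^^ k) (fst (q (r n)))) \<longlonglongrightarrow> (f ^^ k) a"
      using continuous_on_tendsto_compose[OF cont lim_fst] ab q by (simp add: mem_Times_iff)
    moreover have "(\<lambda>n. (f ^^ k) (snd (q (r n)))) \<longlonglongrightarrow> (f ^^ k) b"
      using continuous_on_tendsto_compose[OF cont lim_snd] ab q by (simp add: mem_Times_iff)
    ultimately show "(\<lambda>n. dist ((f ^^ k) (fst (q (r n)))) ((f ^^ k) (snd (q (r n)))))
        \<longlonglongrightarrow> dist ((f ^^ k) a) ((f ^^ k) b)"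
      by (rule tendsto_dist)
    show "\<forall>\<^sub>F n in sequentially. dist ((f ^^ k) (fst (q (r n)))) ((f ^^ k) (snd (q (r n)))) \<le> c'"
      unfolding eventually_sequentially using q_close le_trans[OF _ seq_suble[OF r]] by blast
  qed simp
  moreover have "\<eta> \<le> dist a b"
    using q_far by (intro tendsto_lowerbound[OF tendsto_dist[OF lim_fst lim_snd]]) simp_all
  then have "a \<noteq> b"
    using assms(6) by auto
  then obtain k where "c \<le> dist ((f ^^ k) a) ((f ^^ k) b)"
    using assms(4) ab unfolding expansivity_constant_def by blast
  ultimately show False
    using assms(5) by (meson leD le_less_trans)
qed

lemma shadowing_with_finite_segment:
  assumes "shadowing_with X f \<epsilon> \<delta>" and "\<delta> > 0" and "f ` X \<subseteq> X"
    and "\<And>i. i \<le> N \<Longrightarrow> xs i \<in> X" and "\<And>i. i < N \<Longrightarrow> dist (f (xs i)) (xs (Suc i)) < \<delta>"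
  obtains p where "p \<in> X" and "\<And>i. i \<le> N \<Longrightarrow> dist ((f ^^ i) p) (xs i) < \<epsilon>"
proof -
  define ys where "ys i = (if i \<le> N then xs i else (f ^^ (i - N)) (xs N))" for i
  have "ys i \<in> X" for i
    using assms(4) funpow_image_subset[OF assms(3)] by (auto simp: ys_def)
  moreover have "dist (f (ys i)) (ys (Suc i)) < \<delta>" for i
  proof (cases "i < N")
    case False
    then have "ys (Suc i) = f (ys i)"
      by (auto simp: ys_def Suc_diff_le)
    then show ?thesis
      using assms(2) by simp
  qed (use assms(5) in \<open>simp add: ys_def\<close>)
  ultimately obtain p where "p \<in> X" "\<And>i. dist ((f ^^ i) p) (ys i) < \<epsilon>"
    using shadowing_withE[OF assms(1)] by blast
  moreover have "ys i = xs i" if "i \<le> N" for i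
    using that by (simp add: ys_def)
  ultimately show thesis
    using that by metis
qed

lemma full_trajectory_shadowing_pseudo_orbit:
  assumes "expansivity_constant X f c" and "shadowing_with X f \<epsilon> \<delta>" and "2 * \<epsilon> \<le> c"
    and "f ` X \<subseteq> X" and "\<And>k. w k \<in> X" and "\<And>k. dist (f (w k)) (w (k + 1)) < \<delta>"
  obtains z where "full_trajectory X f z" and "\<And>n. dist (z n) (w n) < \<epsilon>"
proof -
  \<comment> \<open>z i is the unique point whose forward orbit shadows w from time i on, so f (z i) = z (i + 1).\<close>
  define shadows where
    "shadows p i \<longleftrightarrow> p \<in> X \<and> (\<forall>n. dist ((f ^^ n) p) (w (i + int n)) < \<epsilon>)" for p i
  have exists: "\<exists>p. shadows p i" for i
  proof -
    have pseudo: "dist (f (w (i + int n))) (w (i + int (Suc n))) < \<delta>" for n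
      using assms(6)[of "i + int n"] by (simp add: algebra_simps)
    obtain p where "p \<in> X" and "\<And>n. dist ((f ^^ n) p) (w (i + int n)) < \<epsilon>"
      by (rule shadowing_withE[OF assms(2), of "\<lambda>n. w (i + int n)"]) (use assms(5) pseudo in auto)
    then show ?thesis
      unfolding shadows_def by blast
  qed
  have unique: "p = q" if "shadows p i" "shadows q i" for p q i
  proof (rule expansivity_constant_orbit_eq[OF assms(1)])
    show "dist ((f ^^ n) p) ((f ^^ n) q) < c" for n
      using that assms(3) dist_triangle2[of "(f ^^ n) p" "(f ^^ n) q" "w (i + int n)"]
      unfolding shadows_def by (smt (verit))
  qed (use that in \<open>simp_all add: shadows_def\<close>)
  have step: "shadows (f p) (i + 1)" if "shadows p i" for p i
  proof -
    have "dist ((f ^^ Suc n) p) (w (i + int (Suc n))) < \<epsilon>" for n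
      using that unfolding shadows_def by blast
    then show ?thesis
      using that assms(4) unfolding shadows_def by (auto simp: funpow_swap1 algebra_simps)
  qed
  define z where "z i = (SOME p. shadows p i)" for i
  have z_shadows: "shadows (z i) i" for i
    unfolding z_def using exists by (rule someI_ex)
  have "f (z i) = z (i + 1)" for i
    using unique[OF step[OF z_shadows] z_shadows] .
  moreover have "z i \<in> X" and "dist (z i) (w i) < \<epsilon>" for i
    using z_shadows[of i] unfolding shadows_def by (auto dest: spec[of _ 0])
  ultimately show thesis
    using that unfolding full_trajectory_def by blast
qed

lemma full_trajectory_asymptotic_at_top:
  assumes "expansivity_constant X f c" and "shadowing X f" and "2 * \<epsilon> \<le> c"
    and "full_trajectory X f z" and "\<And>n. dist (z n) (w n) < \<epsilon>"
    and "\<And>k. w k \<in> X" and "((\<lambda>k. dist (f (w k)) (w (k + 1))) \<longlongrightarrow> 0) at_top"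
  shows "((\<lambda>n. dist (z n) (w n)) \<longlongrightarrow> 0) at_top"
  unfolding tendsto_iff dist_real_def
proof (intro allI impI)
  fix e :: real
  assume "e > 0"
  moreover have "\<epsilon> > 0"
    using assms(5)[of 0] by (smt (verit) zero_le_dist)
  ultimately obtain \<delta> where "\<delta> > 0" and shadow: "shadowing_with X f (min e \<epsilon>) \<delta>"
    using assms(2) unfolding shadowing_iff_shadowing_with by (meson min_less_iff_conj)
  then obtain M where M: "\<And>k. M \<le> k \<Longrightarrow> dist (f (w k)) (w (k + 1)) < \<delta>"
    using order_tendstoD(2)[OF assms(7)] unfolding eventually_at_top_linorder by blast
  have pseudo: "dist (f (w (M + int n))) (w (M + int (Suc n))) < \<delta>" for n
    using M[of "M + int n"] by (simp add: algebra_simps)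
  obtain p where "p \<in> X" and p: "\<And>n. dist ((f ^^ n) p) (w (M + int n)) < min e \<epsilon>"
    by (rule shadowing_withE[OF shadow, of "\<lambda>n. w (M + int n)"]) (use assms(6) pseudo in auto)
  \<comment> \<open>The finer shadow p of the tail of w is also an \<epsilon>-shadow, hence equal to z M.\<close>
  have "p = z M"
  proof (rule expansivity_constant_orbit_eq[OF assms(1) \<open>p \<in> X\<close>])
    show "z M \<in> X"
      using assms(4) by (simp add: full_trajectory_def)
    show "dist ((f ^^ n) p) ((f ^^ n) (z M)) < c" for n
      using p[of n] assms(3) assms(5)[of "M + int n"] full_trajectory_funpow[OF assms(4)]
        dist_triangle2[of "(f ^^ n) p" "z (M + int n)" "w (M + int n)"]
      by (smt (verit))
  qed
  then have "dist (z n) (w n) < e" if "M \<le> n" for n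
    using p[of "nat (n - M)"] full_trajectory_funpow[OF assms(4)] that by simp
  then show "\<forall>\<^sub>F n in at_top. \<bar>dist (z n) (w n) - 0\<bar> < e"
    unfolding eventually_at_top_linorder by auto
qed

lemma full_trajectory_asymptotic_at_bot:
  assumes "compact X" and "f ` X \<subseteq> X" and "continuous_on X f"
    and "expansivity_constant X f c" and "shadowing X f" and "2 * \<epsilon> < c"
    and "full_trajectory X f z" and "\<And>n. dist (z n) (w n) < \<epsilon>"
    and "\<And>k. w k \<in> X" and "((\<lambda>k. dist (f (w k)) (w (k + 1))) \<longlongrightarrow> 0) at_bot"
  shows "((\<lambda>n. dist (z n) (w n)) \<longlongrightarrow> 0) at_bot"
  unfolding tendsto_iff dist_real_def
proof (intro allI impI)
  fix e :: real
  assume "e > 0"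
  obtain N where N: "\<And>a b. a \<in> X \<Longrightarrow> b \<in> X \<Longrightarrow>
      (\<forall>k\<le>N. dist ((f ^^ k) a) ((f ^^ k) b) \<le> 2 * \<epsilon>) \<Longrightarrow> dist a b < e/2"
    using expansivity_constant_uniform[OF assms(1-4,6), of "e/2"] \<open>e > 0\<close> by auto
  have "\<epsilon> > 0"
    using assms(8)[of 0] by (smt (verit) zero_le_dist)
  with \<open>e > 0\<close> obtain \<delta> where "\<delta> > 0" and shadow: "shadowing_with X f (min (e/2) \<epsilon>) \<delta>"
    using assms(5) unfolding shadowing_iff_shadowing_with by (metis half_gt_zero min_less_iff_conj)
  then obtain M where M: "\<And>k. k \<le> M \<Longrightarrow> dist (f (w k)) (w (k + 1)) < \<delta>"
    using order_tendstoD(2)[OF assms(10)] unfolding eventually_at_bot_linorder by blast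
  \<comment> \<open>A finer shadow p of the segment w i, ..., w (i + N) stays 2\<epsilon>-close to the orbit of z i
    for N steps, so uniform expansivity makes p, and with it w i, close to z i.\<close>
  have "dist (z i) (w i) < e" if "i \<le> M - int N" for i
  proof -
    have "dist (f (w (i + int k))) (w (i + int (Suc k))) < \<delta>" if "k < N" for k
      using M[of "i + int k"] \<open>i \<le> M - int N\<close> that by (simp add: algebra_simps)
    then obtain p where "p \<in> X" and p: "\<And>k. k \<le> N \<Longrightarrow> dist ((f ^^ k) p) (w (i + int k)) < min (e/2) \<epsilon>"
      using shadowing_with_finite_segment[OF shadow \<open>\<delta> > 0\<close> assms(2), of N "\<lambda>k. w (i + int k)"] assms(9)
      by blast
    have "dist ((f ^^ k) p) ((f ^^ k) (z i)) \<le> 2 * \<epsilon>" if "k \<le> N" for k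
      using p[OF that] assms(8)[of "i + int k"] full_trajectory_funpow[OF assms(7)]
        dist_triangle2[of "(f ^^ k) p" "z (i + int k)" "w (i + int k)"]
      by (smt (verit))
    then have "dist p (z i) < e/2"
      using N \<open>p \<in> X\<close> assms(7) by (simp add: full_trajectory_def)
    moreover have "dist p (w i) < e/2"
      using p[of 0] by simp
    ultimately show ?thesis
      by metric
  qed
  then show "\<forall>\<^sub>F n in at_bot. \<bar>dist (z n) (w n) - 0\<bar> < e"
    unfolding eventually_at_bot_linorder by auto
qed

lemma two_sided_asymptotic_pseudo_orbit_shadowed:
  assumes "compact X" and "f ` X \<subseteq> X" and "continuous_on X f"
    and "expansive X f" and "shadowing X f"
  obtains \<delta> where "\<delta> > 0"
    and "\<And>w. two_sided_asymptotic_pseudo_orbit X f w \<Longrightarrow> (\<And>k. dist (f (w k)) (w (k + 1)) < \<delta>) \<Longrightarrow>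
      \<exists>z. full_trajectory X f z \<and> two_sided_asymptotic z w"
proof -
  obtain c where c: "expansivity_constant X f c"
    using assms(4) expansive_iff_expansivity_constant by blast
  then have "c/4 > 0" and "2 * (c/4) < c" and "2 * (c/4) \<le> c"
    by (simp_all add: expansivity_constant_def)
  then obtain \<delta> where "\<delta> > 0" and shadow: "shadowing_with X f (c/4) \<delta>"
    using assms(5) shadowing_iff_shadowing_with by blast
  show thesis
  proof (rule that[OF \<open>\<delta> > 0\<close>])
    fix w
    assume w: "two_sided_asymptotic_pseudo_orbit X f w" and pseudo: "\<And>k. dist (f (w k)) (w (k + 1)) < \<delta>"
    have w_in: "\<And>k. w k \<in> X"
      using w by (simp add: two_sided_asymptotic_pseudo_orbit_def)
    obtain z where z: "full_trajectory X f z" "\<And>n. dist (z n) (w n) < c/4"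
      by (rule full_trajectory_shadowing_pseudo_orbit[where w = w, OF c shadow \<open>2 * (c/4) \<le> c\<close> assms(2) w_in pseudo]) blast
    have "((\<lambda>n. dist (z n) (w n)) \<longlongrightarrow> 0) at_top"
      using full_trajectory_asymptotic_at_top[where w = w, OF c assms(5) \<open>2 * (c/4) \<le> c\<close> z w_in] w
      by (simp add: two_sided_asymptotic_pseudo_orbit_def)
    moreover have "((\<lambda>n. dist (z n) (w n)) \<longlongrightarrow> 0) at_bot"
      using full_trajectory_asymptotic_at_bot[where w = w, OF assms(1-3) c assms(5) \<open>2 * (c/4) < c\<close> z w_in] w
      by (simp add: two_sided_asymptotic_pseudo_orbit_def)
    ultimately show "\<exists>z. full_trajectory X f z \<and> two_sided_asymptotic z w"
      using z(1) unfolding two_sided_asymptotic_def by blast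
  qed
qed

section \<open>Splicing a pseudo-orbit at a common limit point\<close>

definition splice :: "(int \<Rightarrow> 'a) \<Rightarrow> int \<Rightarrow> int \<Rightarrow> int \<Rightarrow> 'a" where
  "splice x i j k = (if k < i then x k else x (k + (j - i)))"

lemma splice_two_sided_asymptotic_pseudo_orbit:
  assumes "two_sided_asymptotic_pseudo_orbit X f x"
  shows "two_sided_asymptotic_pseudo_orbit X f (splice x i j)"
proof -
  let ?g = "\<lambda>y k. dist (f (y k)) (y (k + 1))"
  have x_in: "\<And>k. x k \<in> X" and x_top: "(?g x \<longlongrightarrow> 0) at_top" and x_bot: "(?g x \<longlongrightarrow> 0) at_bot"
    using assms unfolding two_sided_asymptotic_pseudo_orbit_def by auto
  have "\<forall>\<^sub>F k in at_bot. ?g (splice x i j) k = ?g x k"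
    unfolding eventually_at_bot_dense splice_def by (intro exI[of _ "i - 1"]) auto
  with x_bot have "(?g (splice x i j) \<longlongrightarrow> 0) at_bot"
    by (simp add: tendsto_cong)
  moreover have "\<forall>\<^sub>F k in at_top. ?g (splice x i j) k = ?g x (k + (j - i))"
    unfolding eventually_at_top_linorder splice_def by (intro exI[of _ i]) (auto simp: algebra_simps)
  with filterlim_compose[OF x_top filterlim_int_add_const_at_top]
  have "(?g (splice x i j) \<longlongrightarrow> 0) at_top"
    by (simp add: tendsto_cong)
  ultimately show ?thesis
    using x_in unfolding two_sided_asymptotic_pseudo_orbit_def splice_def by simp
qed

lemma alpha_seq_splice:
  fixes x :: "int \<Rightarrow> 'a::metric_space"
  shows "alpha_seq (splice x i j) = alpha_seq x"
proof (rule alpha_seq_eq_if_asymptotic[OF tendsto_eventually])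
  show "\<forall>\<^sub>F k in at_bot. dist (splice x i j k) (x k) = 0"
    unfolding eventually_at_bot_dense splice_def by auto
qed

lemma omega_seq_splice:
  fixes x :: "int \<Rightarrow> 'a::metric_space"
  shows "omega_seq (splice x i j) = omega_seq x"
proof -
  have "\<forall>\<^sub>F k in at_top. dist (splice x i j k) (x (k + (j - i))) = 0"
    unfolding eventually_at_top_linorder splice_def by (intro exI[of _ i]) auto
  then have "omega_seq (splice x i j) = omega_seq (\<lambda>k. x (k + (j - i)))"
    by (rule omega_seq_eq_if_asymptotic[OF tendsto_eventually])
  also have "\<dots> = omega_seq x"
    by (rule omega_seq_shift)
  finally show ?thesis .
qed

lemma splice_pseudo_orbit_at_limit_point:
  fixes x :: "int \<Rightarrow> 'a::metric_space"
  assumes "two_sided_asymptotic_pseudo_orbit X f x"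
    and "a \<in> alpha_seq x" and "a \<in> omega_seq x" and "\<delta> > 0"
  obtains i j where "\<And>k. dist (f (splice x i j k)) (splice x i j (k + 1)) < \<delta>"
proof -
  let ?g = "\<lambda>k. dist (f (x k)) (x (k + 1))"
  have "\<delta>/2 > 0" and "\<delta>/4 > 0"
    using assms(4) by simp_all
  have g_bot: "(?g \<longlongrightarrow> 0) at_bot" and g_top: "(?g \<longlongrightarrow> 0) at_top"
    using assms(1) unfolding two_sided_asymptotic_pseudo_orbit_def by auto
  obtain Mb where Mb: "\<And>k. k \<le> Mb \<Longrightarrow> ?g k < \<delta>/2"
    using order_tendstoD(2)[OF g_bot \<open>\<delta>/2 > 0\<close>] unfolding eventually_at_bot_linorder by blast
  obtain Mt where Mt: "\<And>k. Mt \<le> k \<Longrightarrow> ?g k < \<delta>/2"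
    using order_tendstoD(2)[OF g_top \<open>\<delta>/2 > 0\<close>] unfolding eventually_at_top_linorder by blast
  have "\<exists>\<^sub>F k in at_bot. dist (x k) a < \<delta>/4"
    using assms(2) \<open>\<delta>/4 > 0\<close> unfolding alpha_seq_iff by blast
  then have "\<exists>\<^sub>F k in at_bot. dist (x k) a < \<delta>/4 \<and> k \<le> Mb"
    using eventually_le_at_bot by (rule frequently_eventually_frequently)
  then obtain i where i: "dist (x i) a < \<delta>/4" "i \<le> Mb"
    by (auto dest: frequently_ex)
  have "\<exists>\<^sub>F k in at_top. dist (x k) a < \<delta>/4"
    using assms(3) \<open>\<delta>/4 > 0\<close> unfolding omega_seq_iff by blast
  then have "\<exists>\<^sub>F k in at_top. dist (x k) a < \<delta>/4 \<and> Mt \<le> k"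
    using eventually_ge_at_top by (rule frequently_eventually_frequently)
  then obtain j where j: "dist (x j) a < \<delta>/4" "Mt \<le> j"
    by (auto dest: frequently_ex)
  have "dist (f (splice x i j k)) (splice x i j (k + 1)) < \<delta>" for k
  proof -
    consider "k + 1 < i" | "k + 1 = i" | "i \<le> k"
      by linarith
    then show ?thesis
    proof cases
      case 1
      then have "?g k < \<delta>/2"
        using Mb i(2) by simp
      with 1 \<open>\<delta> > 0\<close> show ?thesis
        by (simp add: splice_def)
    next
      case 2
      then have "k = i - 1"
        by simp
      then have "dist (f (splice x i j k)) (splice x i j (k + 1)) \<le> ?g (i - 1) + dist (x i) (x j)"
        by (simp add: splice_def dist_triangle)
      moreover have "?g (i - 1) < \<delta>/2"
        using Mb[of "i - 1"] i(2) by simp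
      moreover have "dist (x i) (x j) < \<delta>/2"
        using i(1) j(1) by metric
      ultimately show ?thesis
        by linarith
    next
      case 3
      then have "?g (k + (j - i)) < \<delta>/2"
        using Mt j(2) by simp
      with 3 \<open>\<delta> > 0\<close> show ?thesis
        by (simp add: splice_def add.assoc add.commute[of 1])
    qed
  qed
  then show thesis
    by (rule that)
qed

theorem mainTheorem3:
  fixes X :: "'a::metric_space set" and f :: "'a \<Rightarrow> 'a"
  assumes "compact X"
    and "f ` X \<subseteq> X"
    and "continuous_on X f"
    and "expansive X f"
    and "shadowing X f"
  shows "gamma_restricted_two_sided_orbital_limit_shadowing X f"
  unfolding gamma_restricted_two_sided_orbital_limit_shadowing_def
proof (intro allI impI, elim conjE)
  fix x
  assume x: "two_sided_asymptotic_pseudo_orbit X f x" and limit_sets: "alpha_seq x = omega_seq x"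
  obtain \<delta> where "\<delta> > 0" and shadowed: "\<And>w. two_sided_asymptotic_pseudo_orbit X f w \<Longrightarrow>
      (\<And>k. dist (f (w k)) (w (k + 1)) < \<delta>) \<Longrightarrow> \<exists>z. full_trajectory X f z \<and> two_sided_asymptotic z w"
    using two_sided_asymptotic_pseudo_orbit_shadowed[OF assms] by blast
  obtain a where "a \<in> omega_seq x"
    using omega_seq_nonempty[OF assms(1)] x unfolding two_sided_asymptotic_pseudo_orbit_def by blast
  moreover from this limit_sets have "a \<in> alpha_seq x"
    by simp
  ultimately obtain i j where "\<And>k. dist (f (splice x i j k)) (splice x i j (k + 1)) < \<delta>"
    using splice_pseudo_orbit_at_limit_point[OF x _ _ \<open>\<delta> > 0\<close>] by blast
  then obtain z where z: "full_trajectory X f z" and asym: "two_sided_asymptotic z (splice x i j)"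
    using shadowed splice_two_sided_asymptotic_pseudo_orbit[OF x] by blast
  have "alpha_seq z = alpha_seq x" and "omega_seq z = omega_seq x"
    using two_sided_asymptotic_limit_sets[OF asym] by (simp_all add: alpha_seq_splice omega_seq_splice)
  with z show "\<exists>z. full_trajectory X f z \<and> alpha_seq z = alpha_seq x \<and> omega_seq z = omega_seq x"
    by blast
qed

end
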